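(* Let $X,Y \in \mathcal{B(H)}$ and $q \in \mathcal{D'}$. Then \begin{itemize} \item[(a)] $\max\{w_q(X-Y),w_q(X+Y)\} \le w_q\left(\begin{bmatrix} X & Y\\ Y & X \end{bmatrix}\right) \le \max\{ \|X-Y\|, \|X+Y\|\}$, \item[(b)] $\frac{1}{2}\max\{w_q(X+Y),w_q(X-Y)\} \le w_q \left(\begin{bmatrix} 0 & X\\ Y & 0 \end{bmatrix}\right) \le \frac{1}{2}(\|X+Y\|+\|X-Y\|)$. \end{itemize}
   Context: $\mathcal{H}$ is a complex Hilbert space, $\mathcal{B(H)}$ the algebra of bounded linear operators on $\mathcal{H}$ with the operator norm, and $2\times 2$ operator matrices act on $\mathcal{H}\oplus\mathcal{H}$. $\mathcal{D}$ is the closed unit disc in $\mathbb{C}$ and $\mathcal{D'}=\mathcal{D}\setminus\{0\}$. For $|q|\le 1$, $W_q(T)=\{\langle Tx,y\rangle : \|x\|=\|y\|=1,\ \langle x,y\rangle=q\}$ and $w_q(T)=\sup_{w\in W_q(T)}|w|$. *)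

theory Defs
  imports "HOL-Analysis.Analysis"
begin

class complex_inner = real_normed_vector +
  fixes scaleC :: "complex \<Rightarrow> 'a \<Rightarrow> 'a" (infixr \<open>*\<^sub>C\<close> 75)
    and cinner :: "'a \<Rightarrow> 'a \<Rightarrow> complex"
  assumes scaleC_add_right: "a *\<^sub>C (x + y) = a *\<^sub>C x + a *\<^sub>C y"
    and scaleC_add_left: "(a + b) *\<^sub>C x = a *\<^sub>C x + b *\<^sub>C x"
    and scaleC_scaleC: "a *\<^sub>C (b *\<^sub>C x) = (a * b) *\<^sub>C x"
    and scaleC_one: "1 *\<^sub>C x = x"
    and scaleR_scaleC: "scaleR r x = complex_of_real r *\<^sub>C x"
    and cinner_add_left: "cinner (x + y) z = cinner x z + cinner y z"
    and cinner_scaleC_left: "cinner (a *\<^sub>C x) y = a * cinner x y"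
    and cinner_commute: "cinner x y = cnj (cinner y x)"
    and cinner_ge_zero: "0 \<le> Re (cinner x x)"
    and cinner_eq_zero_iff: "cinner x x = 0 \<longleftrightarrow> x = 0"
    and norm_eq_sqrt_cinner: "norm x = sqrt (Re (cinner x x))"

class chilbert_space = complex_inner + complete_space

instantiation complex :: complex_inner
begin
definition scaleC_complex :: "complex \<Rightarrow> complex \<Rightarrow> complex" where
  "scaleC_complex a x = a * x"
definition cinner_complex :: "complex \<Rightarrow> complex \<Rightarrow> complex" where
  "cinner_complex x y = x * cnj y"
instance
proof
  fix a b :: complex and x y z :: complex and r :: real
  show "a *\<^sub>C (x + y) = a *\<^sub>C x + a *\<^sub>C y" by (simp add: scaleC_complex_def algebra_simps)
  show "(a + b) *\<^sub>C x = a *\<^sub>C x + b *\<^sub>C x" by (simp add: scaleC_complex_def algebra_simps)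
  show "a *\<^sub>C (b *\<^sub>C x) = (a * b) *\<^sub>C x" by (simp add: scaleC_complex_def)
  show "1 *\<^sub>C x = x" by (simp add: scaleC_complex_def)
  show "scaleR r x = complex_of_real r *\<^sub>C x" by (simp add: scaleC_complex_def scaleR_conv_of_real)
  show "cinner (x + y) z = cinner x z + cinner y z" by (simp add: cinner_complex_def algebra_simps)
  show "cinner (a *\<^sub>C x) y = a * cinner x y" by (simp add: cinner_complex_def scaleC_complex_def)
  show "cinner x y = cnj (cinner y x)" by (simp add: cinner_complex_def)
  show "0 \<le> Re (cinner x x)" by (simp add: cinner_complex_def)
  show "cinner x x = 0 \<longleftrightarrow> x = 0" by (simp add: cinner_complex_def)
  show "norm x = sqrt (Re (cinner x x))"
    by (simp add: cinner_complex_def complex_mult_cnj cmod_def)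
qed
end

instance complex :: chilbert_space ..

text \<open>Elements of B(H): bounded complex-linear maps; the operator norm is onorm.\<close>
definition bounded_clinear_op :: "('a::complex_inner \<Rightarrow> 'a) \<Rightarrow> bool" where
  "bounded_clinear_op T \<longleftrightarrow> bounded_linear T \<and> (\<forall>c x. T (c *\<^sub>C x) = c *\<^sub>C T x)"

text \<open>Inner product of the Hilbert direct sum H \<oplus> H (the product norm on
  'a \<times> 'a is exactly the induced norm sqrt(norm x1^2 + norm x2^2)).\<close>
definition dsum_inner :: "'a::complex_inner \<times> 'a \<Rightarrow> 'a \<times> 'a \<Rightarrow> complex" where
  "dsum_inner u v = cinner (fst u) (fst v) + cinner (snd u) (snd v)"

definition opmat :: "('a::complex_inner \<Rightarrow> 'a) \<Rightarrow> ('a \<Rightarrow> 'a) \<Rightarrow> ('a \<Rightarrow> 'a) \<Rightarrow> ('a \<Rightarrow> 'a)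
    \<Rightarrow> 'a \<times> 'a \<Rightarrow> 'a \<times> 'a" where
  "opmat A B C D = (\<lambda>(x1, x2). (A x1 + B x2, C x1 + D x2))"

definition qnum_range_wrt :: "('b::real_normed_vector \<Rightarrow> 'b \<Rightarrow> complex) \<Rightarrow> complex
    \<Rightarrow> ('b \<Rightarrow> 'b) \<Rightarrow> complex set" where
  "qnum_range_wrt ip q T =
     {ip (T x) y | x y. norm x = 1 \<and> norm y = 1 \<and> ip x y = q}"

text \<open>q-numerical radius; the supremum of the empty set is taken to be 0.\<close>
definition qnum_radius_wrt :: "('b::real_normed_vector \<Rightarrow> 'b \<Rightarrow> complex) \<Rightarrow> complex
    \<Rightarrow> ('b \<Rightarrow> 'b) \<Rightarrow> real" where
  "qnum_radius_wrt ip q T = Sup (insert 0 (cmod ` qnum_range_wrt ip q T))"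

abbreviation Wq :: "complex \<Rightarrow> ('a::complex_inner \<Rightarrow> 'a) \<Rightarrow> complex set" where
  "Wq q T \<equiv> qnum_range_wrt cinner q T"

abbreviation wq :: "complex \<Rightarrow> ('a::complex_inner \<Rightarrow> 'a) \<Rightarrow> real" where
  "wq q T \<equiv> qnum_radius_wrt cinner q T"

abbreviation wq2 :: "complex \<Rightarrow> ('a::complex_inner \<times> 'a \<Rightarrow> 'a \<times> 'a) \<Rightarrow> real" where
  "wq2 q T \<equiv> qnum_radius_wrt dsum_inner q T"

end

theory Submission
  imports Defs
begin

(* The upper bounds combine |<T u, v>| <= norm (T u) (Cauchy-Schwarz) with two norm estimates:
   norm [X Y; Y X] <= max (norm (X - Y)) (norm (X + Y)) by the parallelogram law (the matrix is
   unitarily equivalent to diag (X + Y) (X - Y)), and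
   norm [0 X; Y 0] <= max (norm X) (norm Y) <= (norm (X + Y) + norm (X - Y)) / 2.
   For the lower bounds, compress the matrices along the isometries x \<mapsto> (x, x) / sqrt 2,
   x \<mapsto> (x, - x) / sqrt 2 and x \<mapsto> (x, i x) / sqrt 2 of H into H \<oplus> H: they preserve the
   constraint <x, y> = q and turn the quadratic forms of the matrices into <(X + Y) x, y>,
   <(X - Y) x, y>, <(X + Y) x, y> / 2 and i <(X - Y) x, y> / 2. *)

lemma cinner_add_right: "cinner (x::'a::complex_inner) (y + z) = cinner x y + cinner x z"
  by (subst (1 2 3) cinner_commute) (simp add: cinner_add_left)

lemma cinner_scaleC_right: "cinner (x::'a::complex_inner) (a *\<^sub>C y) = cnj a * cinner x y"
  by (subst (1 2) cinner_commute) (simp add: cinner_scaleC_left)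

lemma cinner_zero_left [simp]: "cinner 0 (y::'a::complex_inner) = 0"
  using cinner_add_left [of 0 0 y] by simp

lemma cinner_zero_right [simp]: "cinner (x::'a::complex_inner) 0 = 0"
  using cinner_add_right [of x 0 0] by simp

lemma cinner_minus_left: "cinner (- x) (y::'a::complex_inner) = - cinner x y"
  using cinner_add_left [of "- x" x y] by (simp add: eq_neg_iff_add_eq_0)

lemma cinner_minus_right: "cinner (x::'a::complex_inner) (- y) = - cinner x y"
  by (subst (1 2) cinner_commute) (simp add: cinner_minus_left)

lemma cinner_diff_left: "cinner (x - y) (z::'a::complex_inner) = cinner x z - cinner y z"
  using cinner_add_left [of x "- y" z] by (simp add: cinner_minus_left)

lemma cinner_self: "cinner (x::'a::complex_inner) x = of_real ((norm x)\<^sup>2)"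
proof -
  have "Im (cinner x x) = 0"
    using arg_cong [OF cinner_commute [of x x], of Im] by simp
  moreover have "Re (cinner x x) = (norm x)\<^sup>2"
    using norm_eq_sqrt_cinner [of x] cinner_ge_zero [of x] by simp
  ultimately show ?thesis by (simp add: complex_eq_iff)
qed

lemma norm_scaleC: "norm (a *\<^sub>C (x::'a::complex_inner)) = cmod a * norm x"
proof -
  have "of_real ((norm (a *\<^sub>C x))\<^sup>2) = a * cnj a * cinner x x"
    by (simp only: cinner_self [symmetric] cinner_scaleC_left cinner_scaleC_right
        mult.assoc mult.left_commute)
  also have "\<dots> = of_real ((cmod a * norm x)\<^sup>2)"
    by (simp only: cinner_self complex_norm_square [symmetric] power_mult_distrib of_real_mult)
  finally have "(norm (a *\<^sub>C x))\<^sup>2 = (cmod a * norm x)\<^sup>2"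
    by (simp only: of_real_eq_iff)
  then show ?thesis by (rule power2_eq_imp_eq) simp_all
qed

lemma norm_add_square:
  "(norm (x + y))\<^sup>2 = (norm x)\<^sup>2 + (norm y)\<^sup>2 + 2 * Re (cinner x (y::'a::complex_inner))"
proof -
  have "cinner (x + y) (x + y) = cinner x x + cinner y y + (cinner x y + cnj (cinner x y))"
    by (simp add: cinner_add_left cinner_add_right cinner_commute [of y x])
  then have "Re (cinner (x + y) (x + y)) = Re (cinner x x) + Re (cinner y y) + 2 * Re (cinner x y)"
    by simp
  then show ?thesis by (simp only: cinner_self Re_complex_of_real)
qed

lemma norm_diff_square:
  "(norm (x - y))\<^sup>2 = (norm x)\<^sup>2 + (norm y)\<^sup>2 - 2 * Re (cinner x (y::'a::complex_inner))"
  using norm_add_square [of x "- y"] by (simp add: cinner_minus_right)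

lemma parallelogram_law:
  "(norm (x + y))\<^sup>2 + (norm (x - y))\<^sup>2 = 2 * (norm x)\<^sup>2 + 2 * (norm (y::'a::complex_inner))\<^sup>2"
  using norm_add_square [of x y] norm_diff_square [of x y] by linarith

lemma cinner_Cauchy_Schwarz: "cmod (cinner x y) \<le> norm x * norm (y::'a::complex_inner)"
proof (cases "y = 0")
  case False
  (* t y is the orthogonal projection of x onto the line through y *)
  define n where "n = (norm y)\<^sup>2"
  define c where "c = cinner x y"
  define t where "t = c / of_real n"
  have "n > 0"
    using False by (simp add: n_def)
  have "cmod t = cmod c / n"
    using \<open>n > 0\<close> by (simp add: t_def norm_divide)
  then have norm_t: "(cmod t * norm y)\<^sup>2 = (cmod c)\<^sup>2 / n"
    using \<open>n > 0\<close>
    by (simp add: power_mult_distrib power_divide flip: n_def) (simp add: power2_eq_square)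
  have "cinner x (t *\<^sub>C y) = c * cnj c / of_real n"
    by (simp add: cinner_scaleC_right t_def c_def)
  also have "\<dots> = of_real ((cmod c)\<^sup>2 / n)"
    by (simp only: complex_norm_square of_real_divide)
  finally have inner_t: "Re (cinner x (t *\<^sub>C y)) = (cmod c)\<^sup>2 / n"
    by simp
  have "0 \<le> (norm (x - t *\<^sub>C y))\<^sup>2"
    by simp
  also have "\<dots> = (norm x)\<^sup>2 - (cmod c)\<^sup>2 / n"
    by (simp add: norm_diff_square norm_scaleC norm_t inner_t)
  finally have "(cmod c)\<^sup>2 \<le> (norm x * norm y)\<^sup>2"
    using \<open>n > 0\<close> by (simp add: n_def field_simps)
  then show ?thesis
    unfolding c_def by (rule power2_le_imp_le) simp
qed simp

instantiation prod :: (complex_inner, complex_inner) complex_inner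
begin

definition scaleC_prod_def: "c *\<^sub>C u = (c *\<^sub>C fst u, c *\<^sub>C snd u)"

definition cinner_prod_def: "cinner u v = cinner (fst u) (fst v) + cinner (snd u) (snd v)"

instance
proof
  fix a b :: complex and x y z :: "'a \<times> 'b" and r :: real
  have cinner_self_prod: "cinner x x = of_real ((norm (fst x))\<^sup>2 + (norm (snd x))\<^sup>2)"
    by (simp add: cinner_prod_def cinner_self)
  show "a *\<^sub>C (x + y) = a *\<^sub>C x + a *\<^sub>C y"
    by (simp add: scaleC_prod_def scaleC_add_right)
  show "(a + b) *\<^sub>C x = a *\<^sub>C x + b *\<^sub>C x"
    by (simp add: scaleC_prod_def scaleC_add_left)
  show "a *\<^sub>C (b *\<^sub>C x) = (a * b) *\<^sub>C x"
    by (simp add: scaleC_prod_def scaleC_scaleC)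
  show "1 *\<^sub>C x = x"
    by (simp add: scaleC_prod_def scaleC_one)
  show "r *\<^sub>R x = complex_of_real r *\<^sub>C x"
    by (simp add: scaleC_prod_def scaleR_prod_def scaleR_scaleC)
  show "cinner (x + y) z = cinner x z + cinner y z"
    by (simp add: cinner_prod_def cinner_add_left)
  show "cinner (a *\<^sub>C x) y = a * cinner x y"
    by (simp add: cinner_prod_def scaleC_prod_def cinner_scaleC_left distrib_left)
  show "cinner x y = cnj (cinner y x)"
    by (simp add: cinner_prod_def cinner_commute [of "fst x"] cinner_commute [of "snd x"])
  show "0 \<le> Re (cinner x x)"
    by (simp add: cinner_self_prod)
  show "cinner x x = 0 \<longleftrightarrow> x = 0"
    by (simp add: cinner_self_prod add_nonneg_eq_0_iff prod_eq_iff del: of_real_add)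
  show "norm x = sqrt (Re (cinner x x))"
    by (simp add: cinner_self_prod norm_prod_def)
qed

end

lemma dsum_inner_eq_cinner: "dsum_inner = cinner"
  by (simp add: dsum_inner_def cinner_prod_def fun_eq_iff)

lemma qnum_radius_le:
  assumes "0 \<le> B"
    and "\<And>x y. norm x = 1 \<Longrightarrow> norm y = 1 \<Longrightarrow> ip x y = q \<Longrightarrow> cmod (ip (T x) y) \<le> B"
  shows "qnum_radius_wrt ip q T \<le> B"
  unfolding qnum_radius_wrt_def qnum_range_wrt_def
  by (rule cSup_least) (auto intro: assms)

lemma qnum_radius_ge:
  assumes "bdd_above (cmod ` qnum_range_wrt ip q T)"
    and "norm x = 1" "norm y = 1" "ip x y = q"
  shows "cmod (ip (T x) y) \<le> qnum_radius_wrt ip q T"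
  unfolding qnum_radius_wrt_def
  using assms by (intro cSup_upper) (auto simp: qnum_range_wrt_def)

lemma qnum_radius_nonneg:
  assumes "bdd_above (cmod ` qnum_range_wrt ip q T)"
  shows "0 \<le> qnum_radius_wrt ip q T"
  unfolding qnum_radius_wrt_def using assms by (intro cSup_upper) auto

lemma cmod_cinner_le_norm_bound:
  fixes T :: "'a::complex_inner \<Rightarrow> 'a"
  assumes "\<And>u. norm (T u) \<le> c * norm u" and "norm x = 1" "norm y = 1"
  shows "cmod (cinner (T x) y) \<le> c"
  using cinner_Cauchy_Schwarz [of "T x" y] assms(1) [of x] assms(2,3) by simp

lemma bdd_above_qnum_range:
  fixes T :: "'a::complex_inner \<Rightarrow> 'a"
  assumes "\<And>u. norm (T u) \<le> c * norm u"
  shows "bdd_above (cmod ` Wq q T)"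
  using cmod_cinner_le_norm_bound [OF assms]
  by (intro bdd_aboveI [where M = c]) (auto simp: qnum_range_wrt_def)

lemma qnum_radius_le_norm_bound:
  fixes T :: "'a::complex_inner \<Rightarrow> 'a"
  assumes "0 \<le> c" and "\<And>u. norm (T u) \<le> c * norm u"
  shows "wq q T \<le> c"
  using assms(1) cmod_cinner_le_norm_bound [OF assms(2)] by (rule qnum_radius_le)

lemma qnum_radius_le_compression:
  fixes S :: "'a::complex_inner \<Rightarrow> 'a" and T :: "'b::complex_inner \<Rightarrow> 'b" and V :: "'a \<Rightarrow> 'b"
  assumes bdd: "bdd_above (cmod ` Wq q T)"
    and isometry: "\<And>x y. cinner (V x) (V y) = cinner x y"
    and "0 \<le> k"
    and compress: "\<And>x y. cmod (cinner (S x) y) \<le> k * cmod (cinner (T (V x)) (V y))"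
  shows "wq q S \<le> k * wq q T"
proof (rule qnum_radius_le)
  show "0 \<le> k * wq q T"
    using \<open>0 \<le> k\<close> qnum_radius_nonneg [OF bdd] by simp
  have norm_V: "norm (V x) = norm x" for x
    by (simp add: norm_eq_sqrt_cinner isometry)
  fix x y :: 'a
  assume "norm x = 1" "norm y = 1" "cinner x y = q"
  then have "cmod (cinner (T (V x)) (V y)) \<le> wq q T"
    by (intro qnum_radius_ge [OF bdd]) (simp_all add: norm_V isometry)
  then show "cmod (cinner (S x) y) \<le> k * wq q T"
    using compress [of x y] \<open>0 \<le> k\<close> by (meson mult_left_mono order_trans)
qed

lemma cinner_scaleC_Pair:
  fixes x y :: "'a::complex_inner"
  assumes "(cmod a)\<^sup>2 + (cmod b)\<^sup>2 = 1"
  shows "cinner (a *\<^sub>C x, b *\<^sub>C x) (a *\<^sub>C y, b *\<^sub>C y) = cinner x y"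
proof -
  have "cinner (a *\<^sub>C x, b *\<^sub>C x) (a *\<^sub>C y, b *\<^sub>C y) = (a * cnj a + b * cnj b) * cinner x y"
    by (simp add: cinner_prod_def cinner_scaleC_left cinner_scaleC_right algebra_simps)
  also have "a * cnj a + b * cnj b = 1"
    by (simp only: complex_norm_square [symmetric] of_real_add [symmetric] assms of_real_1)
  finally show ?thesis by simp
qed

lemma cinner_opmat_scaleC_Pair:
  fixes A B C D :: "'a::complex_inner \<Rightarrow> 'a"
  assumes "\<And>c z. A (c *\<^sub>C z) = c *\<^sub>C A z" "\<And>c z. B (c *\<^sub>C z) = c *\<^sub>C B z"
    "\<And>c z. C (c *\<^sub>C z) = c *\<^sub>C C z" "\<And>c z. D (c *\<^sub>C z) = c *\<^sub>C D z"
  shows "cinner (opmat A B C D (a *\<^sub>C x, b *\<^sub>C x)) (a *\<^sub>C y, b *\<^sub>C y)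
    = a * cnj a * cinner (A x) y + b * cnj a * cinner (B x) y
      + a * cnj b * cinner (C x) y + b * cnj b * cinner (D x) y"
  by (simp add: opmat_def assms cinner_prod_def cinner_add_left cinner_scaleC_left
      cinner_scaleC_right algebra_simps)

lemma norm_Pair_le_of_sum_diff:
  fixes P Q x1 x2 :: "'a::complex_inner"
  assumes "0 \<le> c"
    and "norm (P + Q) \<le> c * norm (x1 + x2)" and "norm (P - Q) \<le> c * norm (x1 - x2)"
  shows "norm (P, Q) \<le> c * norm (x1, x2)"
proof -
  have "2 * (norm (P, Q))\<^sup>2 = (norm (P + Q))\<^sup>2 + (norm (P - Q))\<^sup>2"
    by (simp only: parallelogram_law) (simp add: norm_Pair)
  also have "\<dots> \<le> (c * norm (x1 + x2))\<^sup>2 + (c * norm (x1 - x2))\<^sup>2"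
    using assms(2,3) by (intro add_mono power_mono norm_ge_zero)
  also have "\<dots> = c\<^sup>2 * ((norm (x1 + x2))\<^sup>2 + (norm (x1 - x2))\<^sup>2)"
    by (simp add: power_mult_distrib distrib_left)
  also have "\<dots> = 2 * (c * norm (x1, x2))\<^sup>2"
    by (simp only: parallelogram_law) (simp add: norm_Pair algebra_simps)
  finally have "(norm (P, Q))\<^sup>2 \<le> (c * norm (x1, x2))\<^sup>2"
    by simp
  then show ?thesis
    by (rule power2_le_imp_le) (simp add: assms(1))
qed

lemma norm_opmat_sym_le:
  fixes X Y :: "'a::complex_inner \<Rightarrow> 'a"
  assumes "bounded_linear X" and "bounded_linear Y"
  shows "norm (opmat X Y Y X u)
    \<le> max (onorm (\<lambda>x. X x - Y x)) (onorm (\<lambda>x. X x + Y x)) * norm u"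
proof -
  interpret X: bounded_linear X by fact
  interpret Y: bounded_linear Y by fact
  obtain x1 x2 where u: "u = (x1, x2)"
    by (cases u)
  let ?m = "max (onorm (\<lambda>x. X x - Y x)) (onorm (\<lambda>x. X x + Y x))"
  have sum: "bounded_linear (\<lambda>x. X x + Y x)" and diff: "bounded_linear (\<lambda>x. X x - Y x)"
    using assms by (simp_all add: bounded_linear_add bounded_linear_sub)
  have "norm (X x1 + Y x2 + (Y x1 + X x2)) = norm (X (x1 + x2) + Y (x1 + x2))"
    by (simp add: X.add Y.add algebra_simps)
  also have "\<dots> \<le> onorm (\<lambda>x. X x + Y x) * norm (x1 + x2)"
    by (rule onorm [OF sum])
  also have "\<dots> \<le> ?m * norm (x1 + x2)"
    by (rule mult_right_mono) simp_all
  finally have sum_bound: "norm (X x1 + Y x2 + (Y x1 + X x2)) \<le> ?m * norm (x1 + x2)" .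
  have "norm (X x1 + Y x2 - (Y x1 + X x2)) = norm (X (x1 - x2) - Y (x1 - x2))"
    by (simp add: X.diff Y.diff algebra_simps)
  also have "\<dots> \<le> onorm (\<lambda>x. X x - Y x) * norm (x1 - x2)"
    by (rule onorm [OF diff])
  also have "\<dots> \<le> ?m * norm (x1 - x2)"
    by (rule mult_right_mono) simp_all
  finally have diff_bound: "norm (X x1 + Y x2 - (Y x1 + X x2)) \<le> ?m * norm (x1 - x2)" .
  have "0 \<le> ?m"
    using onorm_pos_le [OF sum] by simp
  with sum_bound diff_bound show ?thesis
    by (simp add: u opmat_def norm_Pair_le_of_sum_diff)
qed

lemma norm_le_mean_onorm_sum_diff:
  fixes X Y :: "'a::real_normed_vector \<Rightarrow> 'b::real_normed_vector"
  assumes "bounded_linear X" and "bounded_linear Y"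
  defines "K \<equiv> (onorm (\<lambda>x. X x + Y x) + onorm (\<lambda>x. X x - Y x)) / 2"
  shows "norm (X z) \<le> K * norm z" and "norm (Y z) \<le> K * norm z"
proof -
  have "norm (X z + Y z) + norm (X z - Y z)
      \<le> onorm (\<lambda>x. X x + Y x) * norm z + onorm (\<lambda>x. X x - Y x) * norm z"
    using assms by (intro add_mono onorm bounded_linear_add bounded_linear_sub)
  also have "\<dots> = 2 * (K * norm z)"
    by (simp add: K_def algebra_simps)
  finally have bound: "norm (X z + Y z) + norm (X z - Y z) \<le> 2 * (K * norm z)" .
  have "2 * norm (X z) = norm ((X z + Y z) + (X z - Y z))"
    by (simp add: scaleR_2 [symmetric])
  also have "\<dots> \<le> norm (X z + Y z) + norm (X z - Y z)"
    by (rule norm_triangle_ineq)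
  finally show "norm (X z) \<le> K * norm z"
    using bound by simp
  have "2 * norm (Y z) = norm ((X z + Y z) - (X z - Y z))"
    by (simp add: scaleR_2 [symmetric])
  also have "\<dots> \<le> norm (X z + Y z) + norm (X z - Y z)"
    by (rule norm_triangle_ineq4)
  finally show "norm (Y z) \<le> K * norm z"
    using bound by simp
qed

lemma norm_opmat_antidiag_le:
  fixes X Y :: "'a::complex_inner \<Rightarrow> 'a"
  assumes "0 \<le> c" and "\<And>z. norm (X z) \<le> c * norm z" and "\<And>z. norm (Y z) \<le> c * norm z"
  shows "norm (opmat (\<lambda>_. 0) X Y (\<lambda>_. 0) u) \<le> c * norm u"
proof -
  obtain x1 x2 where u: "u = (x1, x2)"
    by (cases u)
  have "(norm (X x2, Y x1))\<^sup>2 = (norm (X x2))\<^sup>2 + (norm (Y x1))\<^sup>2"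
    by (simp add: norm_Pair)
  also have "\<dots> \<le> (c * norm x2)\<^sup>2 + (c * norm x1)\<^sup>2"
    using assms(2,3) by (intro add_mono power_mono norm_ge_zero)
  also have "\<dots> = (c * norm (x1, x2))\<^sup>2"
    by (simp add: norm_Pair algebra_simps)
  finally have "norm (X x2, Y x1) \<le> c * norm (x1, x2)"
    by (rule power2_le_imp_le) (simp add: assms(1))
  then show ?thesis
    by (simp add: u opmat_def)
qed

lemma qnum_radius_sum_diff_le_opmat_sym:
  fixes X Y :: "'a::complex_inner \<Rightarrow> 'a"
  assumes X: "\<And>c z. X (c *\<^sub>C z) = c *\<^sub>C X z" and Y: "\<And>c z. Y (c *\<^sub>C z) = c *\<^sub>C Y z"
    and bdd: "bdd_above (cmod ` Wq q (opmat X Y Y X))"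
  shows "wq q (\<lambda>x. X x + Y x) \<le> wq q (opmat X Y Y X)"
    and "wq q (\<lambda>x. X x - Y x) \<le> wq q (opmat X Y Y X)"
proof -
  define s where "s = complex_of_real (sqrt (1/2))"
  have s: "s * cnj s = 1/2" "(cmod s)\<^sup>2 = 1/2"
    by (simp_all add: s_def flip: of_real_mult)
  have "wq q (\<lambda>x. X x + Y x) \<le> 1 * wq q (opmat X Y Y X)"
  proof (rule qnum_radius_le_compression [OF bdd])
    show "cinner (s *\<^sub>C x, s *\<^sub>C x) (s *\<^sub>C y, s *\<^sub>C y) = cinner x y" for x y :: 'a
      by (rule cinner_scaleC_Pair) (simp add: s)
    show "cmod (cinner (X x + Y x) y)
      \<le> 1 * cmod (cinner (opmat X Y Y X (s *\<^sub>C x, s *\<^sub>C x)) (s *\<^sub>C y, s *\<^sub>C y))" for x y :: 'a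
      by (simp add: cinner_opmat_scaleC_Pair [OF X Y Y X] s cinner_add_left)
  qed simp
  then show "wq q (\<lambda>x. X x + Y x) \<le> wq q (opmat X Y Y X)"
    by simp
  have "wq q (\<lambda>x. X x - Y x) \<le> 1 * wq q (opmat X Y Y X)"
  proof (rule qnum_radius_le_compression [OF bdd])
    show "cinner (s *\<^sub>C x, (- s) *\<^sub>C x) (s *\<^sub>C y, (- s) *\<^sub>C y) = cinner x y" for x y :: 'a
      by (rule cinner_scaleC_Pair) (simp add: s)
    show "cmod (cinner (X x - Y x) y)
      \<le> 1 * cmod (cinner (opmat X Y Y X (s *\<^sub>C x, (- s) *\<^sub>C x)) (s *\<^sub>C y, (- s) *\<^sub>C y))"
      for x y :: 'a
      by (simp add: cinner_opmat_scaleC_Pair [OF X Y Y X] s cinner_diff_left)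
  qed simp
  then show "wq q (\<lambda>x. X x - Y x) \<le> wq q (opmat X Y Y X)"
    by simp
qed

lemma qnum_radius_sum_diff_le_opmat_antidiag:
  fixes X Y :: "'a::complex_inner \<Rightarrow> 'a"
  assumes X: "\<And>c z. X (c *\<^sub>C z) = c *\<^sub>C X z" and Y: "\<And>c z. Y (c *\<^sub>C z) = c *\<^sub>C Y z"
    and bdd: "bdd_above (cmod ` Wq q (opmat (\<lambda>_. 0) X Y (\<lambda>_. 0)))"
  shows "wq q (\<lambda>x. X x + Y x) \<le> 2 * wq q (opmat (\<lambda>_. 0) X Y (\<lambda>_. 0))"
    and "wq q (\<lambda>x. X x - Y x) \<le> 2 * wq q (opmat (\<lambda>_. 0) X Y (\<lambda>_. 0))"
proof -
  define s where "s = complex_of_real (sqrt (1/2))"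
  have s: "s * cnj s = 1/2" "(cmod s)\<^sup>2 = 1/2"
    by (simp_all add: s_def flip: of_real_mult)
  have zero: "(\<lambda>_. 0::'a) (c *\<^sub>C z) = c *\<^sub>C (\<lambda>_. 0::'a) z" for c and z :: 'a
    using scaleC_add_right [of c "0::'a" 0] by simp
  show "wq q (\<lambda>x. X x + Y x) \<le> 2 * wq q (opmat (\<lambda>_. 0) X Y (\<lambda>_. 0))"
  proof (rule qnum_radius_le_compression [OF bdd])
    show "cinner (s *\<^sub>C x, s *\<^sub>C x) (s *\<^sub>C y, s *\<^sub>C y) = cinner x y" for x y :: 'a
      by (rule cinner_scaleC_Pair) (simp add: s)
    show "cmod (cinner (X x + Y x) y)
      \<le> 2 * cmod (cinner (opmat (\<lambda>_. 0) X Y (\<lambda>_. 0) (s *\<^sub>C x, s *\<^sub>C x))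
                   (s *\<^sub>C y, s *\<^sub>C y))" for x y :: 'a
    proof -
      have "cinner (X x + Y x) y
          = 2 * cinner (opmat (\<lambda>_. 0) X Y (\<lambda>_. 0) (s *\<^sub>C x, s *\<^sub>C x)) (s *\<^sub>C y, s *\<^sub>C y)"
        by (simp add: cinner_opmat_scaleC_Pair [OF zero X Y zero] s cinner_add_left)
      then show ?thesis
        by (simp add: norm_mult)
    qed
  qed simp
  show "wq q (\<lambda>x. X x - Y x) \<le> 2 * wq q (opmat (\<lambda>_. 0) X Y (\<lambda>_. 0))"
  proof (rule qnum_radius_le_compression [OF bdd])
    show "cinner (s *\<^sub>C x, (\<i> * s) *\<^sub>C x) (s *\<^sub>C y, (\<i> * s) *\<^sub>C y) = cinner x y" for x y :: 'a
      by (rule cinner_scaleC_Pair) (simp add: s norm_mult)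
    show "cmod (cinner (X x - Y x) y)
      \<le> 2 * cmod (cinner (opmat (\<lambda>_. 0) X Y (\<lambda>_. 0) (s *\<^sub>C x, (\<i> * s) *\<^sub>C x))
                   (s *\<^sub>C y, (\<i> * s) *\<^sub>C y))" for x y :: 'a
    proof -
      have "cinner (X x - Y x) y
          = - 2 * \<i> * cinner (opmat (\<lambda>_. 0) X Y (\<lambda>_. 0) (s *\<^sub>C x, (\<i> * s) *\<^sub>C x))
                              (s *\<^sub>C y, (\<i> * s) *\<^sub>C y)"
        by (simp add: cinner_opmat_scaleC_Pair [OF zero X Y zero] s cinner_diff_left algebra_simps)
      then show ?thesis
        by (simp add: norm_mult)
    qed
  qed simp
qed

theorem proposition3p1:
  fixes X Y :: "'a::chilbert_space \<Rightarrow> 'a" and q :: complex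
  assumes "bounded_clinear_op X" and "bounded_clinear_op Y"
    and "cmod q \<le> 1" and "q \<noteq> 0"
  shows "max (wq q (\<lambda>x. X x - Y x)) (wq q (\<lambda>x. X x + Y x)) \<le> wq2 q (opmat X Y Y X)
       \<and> wq2 q (opmat X Y Y X) \<le> max (onorm (\<lambda>x. X x - Y x)) (onorm (\<lambda>x. X x + Y x))
       \<and> (1/2) * max (wq q (\<lambda>x. X x + Y x)) (wq q (\<lambda>x. X x - Y x)) \<le> wq2 q (opmat (\<lambda>_. 0) X Y (\<lambda>_. 0))
       \<and> wq2 q (opmat (\<lambda>_. 0) X Y (\<lambda>_. 0)) \<le> (1/2) * (onorm (\<lambda>x. X x + Y x) + onorm (\<lambda>x. X x - Y x))"
proof -
  have X: "bounded_linear X" "\<And>c z. X (c *\<^sub>C z) = c *\<^sub>C X z"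
    and Y: "bounded_linear Y" "\<And>c z. Y (c *\<^sub>C z) = c *\<^sub>C Y z"
    using assms(1,2) by (simp_all add: bounded_clinear_op_def)
  define m where "m = max (onorm (\<lambda>x. X x - Y x)) (onorm (\<lambda>x. X x + Y x))"
  define K where "K = (onorm (\<lambda>x. X x + Y x) + onorm (\<lambda>x. X x - Y x)) / 2"
  have "0 \<le> onorm (\<lambda>x. X x + Y x)" "0 \<le> onorm (\<lambda>x. X x - Y x)"
    using X(1) Y(1) by (simp_all add: onorm_pos_le bounded_linear_add bounded_linear_sub)
  then have "0 \<le> m" "0 \<le> K"
    by (simp_all add: m_def K_def)
  have sym: "norm (opmat X Y Y X u) \<le> m * norm u" for u
    unfolding m_def using X(1) Y(1) by (rule norm_opmat_sym_le)
  have antidiag: "norm (opmat (\<lambda>_. 0) X Y (\<lambda>_. 0) u) \<le> K * norm u" for u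
    using \<open>0 \<le> K\<close> norm_le_mean_onorm_sum_diff [OF X(1) Y(1)]
    unfolding K_def by (rule norm_opmat_antidiag_le)
  show ?thesis
    unfolding dsum_inner_eq_cinner
    using qnum_radius_sum_diff_le_opmat_sym [OF X(2) Y(2) bdd_above_qnum_range [OF sym]]
      qnum_radius_le_norm_bound [OF \<open>0 \<le> m\<close> sym]
      qnum_radius_sum_diff_le_opmat_antidiag [OF X(2) Y(2) bdd_above_qnum_range [OF antidiag]]
      qnum_radius_le_norm_bound [OF \<open>0 \<le> K\<close> antidiag]
    by (simp add: m_def K_def mult.commute)
qed

end
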